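(* Suppose Assumptions 1 and 2 hold, $m_c=1$ for all $c\in\mathcal C$, and $\bm\gamma=(\gamma(c))_{c\in\mathcal C}\in(0,1)^{\mathcal C}$. Consider the problem $$\Gamma^*_{\bm\gamma}=\max_{\bm\alpha,\bm\beta\ge0}\ \min_{c\in\mathcal C}\alpha(c)\min_{d\in\mathcal U_c}G_d(\gamma(c),\beta(c,d))$$ subject to $\sum_c\alpha(c)=1$ and $\sum_{d\in\mathcal U_c}\beta(c,d)=1-\gamma(c)$ for all $c$. (i) A feasible $(\bm\alpha,\bm\beta)$ is optimal for this problem if there exists $z>0$ with $$\alpha(c)G_d(\gamma(c),\beta(c,d))=z\quad\text{for all }c\in\mathcal C,\ d\in\mathcal U_c. \qquad (\ast)$$ (ii) There exists an optimal solution of this problem satisfying $(\ast)$. (iii) Suppose $\gamma(c)=\beta^*(c,d^*(c))$ for all $c$, for some optimal solution $(\bm\alpha^*,\bm\beta^* )$ of the unconstrained problem $$\max_{\bm\alpha,\bm\beta\ge0}\min_c\alpha(c)\min_{d\in\mathcal U_c}G_d(\beta(c,d^*(c)),\beta(c,d))$$ subject to $\sum_c\alpha(c)=1$ and $\sum_{d\in\mathcal D_c}\beta(c,d)=1$. Then $(\ast)$ is also necessary for optimality.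
   Context: Setting. - $\mathcal C$ is a finite set of contexts and $\mathcal D=\bigsqcup_c\mathcal D_c$ a finite set of designs. - Designs have true parameters $\theta^*_d=(\mu^*_d,\eta^*_d)\in\Theta=M\times H$, with $M\subseteq\mathbb R$, $H\subseteq\mathbb R^k$, and distinct $\mu^*_d$. - $d^*(c)=\arg\max_{d\in\mathcal D_c}\mu^*_d$ and $\mathcal U_c=\mathcal D_c\setminus\{d^*(c)\}$. Assumption 1. - $\Theta$ is compact with boundary of Lebesgue measure zero. - $p(y\mid\theta)$ is continuous in $\theta$. - The family is identifiable. - Log-likelihood ratios form a universal Glivenko–Cantelli class. Assumption 2. The KL divergence $D(\theta^*\Vert\theta)$ is finite and continuously differentiable in $\theta$. Rate function. For $d\in\mathcal U_c$ and $x,y\ge0$, $$G_d(x,y)=\inf\{y\,D(\theta^*_d\Vert\theta_d)+x\,D(\theta^*_{d^*(c)}\Vert\theta_{d^*(c)}):\theta_d,\theta_{d^*(c)}\in\Theta,\ \mu_d\ge\mu_{d^*(c)}\}.$$ *)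

theory Defs
  imports "HOL-Probability.Probability"
begin

definition KL :: "'y measure \<Rightarrow> ('p \<Rightarrow> 'y \<Rightarrow> real) \<Rightarrow> 'p \<Rightarrow> 'p \<Rightarrow> real" where
  "KL \<nu> p a b = (\<integral>y. p a y * ln (p a y / p b y) \<partial>\<nu>)"

definition universal_GC :: "'y measure \<Rightarrow> ('y \<Rightarrow> real) set \<Rightarrow> bool" where
  "universal_GC M F \<longleftrightarrow>
     (\<forall>Q. prob_space Q \<and> sets Q = sets M \<and> (\<forall>f\<in>F. integrable Q f) \<longrightarrow>
        (AE \<omega> in PiM UNIV (\<lambda>_::nat. Q).
           \<forall>e>0. eventually (\<lambda>n. \<forall>f\<in>F.
              \<bar>(\<Sum>i<n. f (\<omega> i)) / real n - (\<integral>y. f y \<partial>Q)\<bar> \<le> e) sequentially))"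

text \<open>Best design of a context (unique when the means are distinct).\<close>
definition best :: "('d \<Rightarrow> real) \<Rightarrow> 'd set \<Rightarrow> 'd" where
  "best mu Dc = (ARG_MAX mu d. d \<in> Dc)"

text \<open>Rate function G_d(x,y) for design d whose context has best design dst.
  Parameters are pairs (mu, eta); fst is the mean component.\<close>
definition rateG ::
  "(real \<times> 'h \<Rightarrow> real \<times> 'h \<Rightarrow> real) \<Rightarrow> (real \<times> 'h) set \<Rightarrow> ('d \<Rightarrow> real \<times> 'h) \<Rightarrow> 'd \<Rightarrow> 'd
     \<Rightarrow> real \<Rightarrow> real \<Rightarrow> real"
  where
  "rateG Dv \<Theta> \<theta>s d dst x y =
     Inf {y * Dv (\<theta>s d) t1 + x * Dv (\<theta>s dst) t2 | t1 t2.
            t1 \<in> \<Theta> \<and> t2 \<in> \<Theta> \<and> fst t1 \<ge> fst t2}"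

text \<open>R c d x y plays the role of G_d(x,y) for d in context c; U c is the set of
  non-best designs of context c.\<close>

definition objG :: "'c set \<Rightarrow> ('c \<Rightarrow> 'd set) \<Rightarrow> ('c \<Rightarrow> 'd \<Rightarrow> real \<Rightarrow> real \<Rightarrow> real)
     \<Rightarrow> ('c \<Rightarrow> real) \<Rightarrow> ('c \<Rightarrow> real) \<Rightarrow> ('c \<Rightarrow> 'd \<Rightarrow> real) \<Rightarrow> real" where
  "objG C U R \<gamma> \<alpha> \<beta> = Min ((\<lambda>c. \<alpha> c * Min ((\<lambda>d. R c d (\<gamma> c) (\<beta> c d)) ` U c)) ` C)"

definition feasG :: "'c set \<Rightarrow> ('c \<Rightarrow> 'd set) \<Rightarrow> ('c \<Rightarrow> real)
     \<Rightarrow> ('c \<Rightarrow> real) \<Rightarrow> ('c \<Rightarrow> 'd \<Rightarrow> real) \<Rightarrow> bool" where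
  "feasG C U \<gamma> \<alpha> \<beta> \<longleftrightarrow>
     (\<forall>c\<in>C. 0 \<le> \<alpha> c) \<and> sum \<alpha> C = 1 \<and>
     (\<forall>c\<in>C. (\<forall>d\<in>U c. 0 \<le> \<beta> c d) \<and> sum (\<beta> c) (U c) = 1 - \<gamma> c)"

definition optG where
  "optG C U R \<gamma> \<alpha> \<beta> \<longleftrightarrow> feasG C U \<gamma> \<alpha> \<beta> \<and>
     (\<forall>\<alpha>' \<beta>'. feasG C U \<gamma> \<alpha>' \<beta>' \<longrightarrow> objG C U R \<gamma> \<alpha>' \<beta>' \<le> objG C U R \<gamma> \<alpha> \<beta>)"

definition objU :: "'c set \<Rightarrow> ('c \<Rightarrow> 'd set) \<Rightarrow> ('c \<Rightarrow> 'd) \<Rightarrow>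
     ('c \<Rightarrow> 'd \<Rightarrow> real \<Rightarrow> real \<Rightarrow> real) \<Rightarrow> ('c \<Rightarrow> real) \<Rightarrow> ('c \<Rightarrow> 'd \<Rightarrow> real) \<Rightarrow> real" where
  "objU C U dst R \<alpha> \<beta> = Min ((\<lambda>c. \<alpha> c * Min ((\<lambda>d. R c d (\<beta> c (dst c)) (\<beta> c d)) ` U c)) ` C)"

definition feasU :: "'c set \<Rightarrow> ('c \<Rightarrow> 'd set) \<Rightarrow> ('c \<Rightarrow> real) \<Rightarrow> ('c \<Rightarrow> 'd \<Rightarrow> real) \<Rightarrow> bool" where
  "feasU C Dc \<alpha> \<beta> \<longleftrightarrow>
     (\<forall>c\<in>C. 0 \<le> \<alpha> c) \<and> sum \<alpha> C = 1 \<and>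
     (\<forall>c\<in>C. (\<forall>d\<in>Dc c. 0 \<le> \<beta> c d) \<and> sum (\<beta> c) (Dc c) = 1)"

definition optU where
  "optU C Dc U dst R \<alpha> \<beta> \<longleftrightarrow> feasU C Dc \<alpha> \<beta> \<and>
     (\<forall>\<alpha>' \<beta>'. feasU C Dc \<alpha>' \<beta>' \<longrightarrow> objU C U dst R \<alpha>' \<beta>' \<le> objU C U dst R \<alpha> \<beta>)"

end

theory Submission
  imports Defs
begin

text \<open>The rate function \<open>G\<^sub>d\<close> is the lower envelope of the nonnegative linear forms
  \<open>(x, y) \<mapsto> y D(\<theta>\<^sup>*\<^sub>d \<parallel> \<theta>) + x D(\<theta>\<^sup>*\<^sub>d\<^sub>* \<parallel> \<theta>')\<close> over a compact set, hence monotone, superadditive,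
  positively homogeneous, Lipschitz in \<open>y\<close> and concave in \<open>y\<close>.
  Sufficiency: against an equalized allocation, any feasible competitor gives some context no
  more weight and, inside it, some design no more weight, so its objective is not larger.
  Existence: maximizing the smallest \<open>G\<^sub>d(\<gamma>(c), \<cdot>)\<close> over the simplex and handing the slack to
  one design (concavity shows some design can absorb it) equalizes the rates inside a context;
  weights \<open>\<alpha>(c)\<close> inversely proportional to the common values equalize across contexts.
  Necessity: when \<open>\<gamma>\<close> is the best-design share of an unconstrained optimum, an optimal allocation
  with a slack pair \<open>(c\<^sub>0, d\<^sub>0)\<close> is a joint allocation of all designs; moving a little mass from
  \<open>d\<^sub>0\<close> evenly onto all designs strictly raises every rate (homogeneity and superadditivity),
  contradicting the optimality of the unconstrained problem.\<close>

section \<open>Rate functions\<close>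

locale rate_function =
  fixes F :: "real \<Rightarrow> real \<Rightarrow> real"
  assumes zero_right: "0 \<le> x \<Longrightarrow> F x 0 = 0"
    and mono: "0 \<le> x \<Longrightarrow> x \<le> x' \<Longrightarrow> 0 \<le> y \<Longrightarrow> y \<le> y' \<Longrightarrow> F x y \<le> F x' y'"
    and superadditive: "0 \<le> x1 \<Longrightarrow> 0 \<le> y1 \<Longrightarrow> 0 \<le> x2 \<Longrightarrow> 0 \<le> y2 \<Longrightarrow>
      F x1 y1 + F x2 y2 \<le> F (x1 + x2) (y1 + y2)"
    and homogeneous: "0 < k \<Longrightarrow> 0 \<le> x \<Longrightarrow> 0 \<le> y \<Longrightarrow> F (k * x) (k * y) = k * F x y"
    and pos: "0 < x \<Longrightarrow> 0 < y \<Longrightarrow> 0 < F x y"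
    and lipschitz_right: "\<exists>L\<ge>0. \<forall>x y y'. 0 \<le> x \<longrightarrow> 0 \<le> y \<longrightarrow> y \<le> y' \<longrightarrow>
      F x y' \<le> F x y + L * (y' - y)"
begin

lemma nonneg: "0 \<le> x \<Longrightarrow> 0 \<le> y \<Longrightarrow> 0 \<le> F x y"
  using mono[of x x 0 y] zero_right[of x] by simp

lemma scale: "0 \<le> k \<Longrightarrow> 0 \<le> x \<Longrightarrow> 0 \<le> y \<Longrightarrow> F (k * x) (k * y) = k * F x y"
  using homogeneous[of k x y] zero_right[of 0] by (cases "k = 0") auto

lemma concave_right:
  assumes "0 \<le> x" "0 \<le> a" "0 \<le> b" "0 \<le> t" "t \<le> 1"
  shows "(1 - t) * F x a + t * F x b \<le> F x ((1 - t) * a + t * b)"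
proof -
  have "(1 - t) * F x a + t * F x b = F ((1 - t) * x) ((1 - t) * a) + F (t * x) (t * b)"
    using assms by (simp add: scale)
  also have "\<dots> \<le> F ((1 - t) * x + t * x) ((1 - t) * a + t * b)"
    using assms by (intro superadditive) auto
  finally show ?thesis
    by (simp add: algebra_simps)
qed

lemma continuous_right:
  assumes "0 \<le> x"
  shows "continuous_on {0..} (F x)"
proof -
  obtain L where L: "0 \<le> L"
    and lip: "\<And>y y'. 0 \<le> y \<Longrightarrow> y \<le> y' \<Longrightarrow> F x y' \<le> F x y + L * (y' - y)"
    using lipschitz_right assms by blast
  have "dist (F x y) (F x y') \<le> L * dist y y'" if "0 \<le> y" "y \<le> y'" for y y'
  proof -
    have "\<bar>F x y - F x y'\<bar> = F x y' - F x y" "\<bar>y - y'\<bar> = y' - y"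
      using mono[OF assms order.refl that] that by auto
    then show ?thesis
      using lip[OF that] by (simp add: dist_real_def)
  qed
  then have "dist (F x y) (F x y') \<le> L * dist y y'" if "0 \<le> y" "0 \<le> y'" for y y'
    using that by (metis dist_commute nle_le)
  then have "L-lipschitz_on {0..} (F x)"
    using L by (intro lipschitz_onI) auto
  then show ?thesis
    by (rule lipschitz_on_continuous_on)
qed

lemma less_add_diagonal:
  assumes "0 \<le> x" "0 \<le> y" "0 < \<delta>" "V \<le> F x y"
  shows "V < F (x + \<delta>) (y + \<delta>)"
  using superadditive[of x y \<delta> \<delta>] pos[of \<delta> \<delta>] assms by auto

lemma decrease_right_above:
  assumes x: "0 \<le> x" and y: "0 \<le> y" and V: "0 \<le> V" "V < F x y"
  shows "\<exists>\<epsilon>>0. \<epsilon> \<le> y \<and> V < F x (y - \<epsilon>)"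
proof -
  obtain L where L: "0 \<le> L"
    and lip: "\<And>y y'. 0 \<le> y \<Longrightarrow> y \<le> y' \<Longrightarrow> F x y' \<le> F x y + L * (y' - y)"
    using lipschitz_right x by blast
  have "y \<noteq> 0"
    using V zero_right[OF x] by auto
  define \<epsilon> where "\<epsilon> = min y ((F x y - V) / (L + 1))"
  have \<epsilon>: "0 < \<epsilon>" "\<epsilon> \<le> y"
    using y V \<open>y \<noteq> 0\<close> L unfolding \<epsilon>_def by auto
  have "L * \<epsilon> \<le> L * ((F x y - V) / (L + 1))"
    unfolding \<epsilon>_def using L by (intro mult_left_mono) auto
  also have "\<dots> < F x y - V"
    using L V by (simp add: field_simps)
  finally have "F x y < F x (y - \<epsilon>) + (F x y - V)"
    using lip[of "y - \<epsilon>" y] \<epsilon> by simp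
  then show ?thesis
    using \<epsilon> by auto
qed

end

definition linear_envelope :: "(real \<times> real) set \<Rightarrow> real \<Rightarrow> real \<Rightarrow> real" where
  "linear_envelope K x y = Inf ((\<lambda>(a, b). y * a + x * b) ` K)"

lemma linear_envelope_le:
  assumes "compact K" "(a, b) \<in> K"
  shows "linear_envelope K x y \<le> y * a + x * b"
proof -
  have "continuous_on K (\<lambda>(a, b). y * a + x * b)"
    unfolding split_beta by (intro continuous_intros)
  then have "bdd_below ((\<lambda>(a, b). y * a + x * b) ` K)"
    using assms(1) by (intro bounded_imp_bdd_below compact_imp_bounded compact_continuous_image)
  then show ?thesis
    unfolding linear_envelope_def using assms(2) by (intro cInf_lower) auto
qed

lemma linear_envelope_attained:
  assumes "compact K" "K \<noteq> {}"
  obtains a b where "(a, b) \<in> K" "linear_envelope K x y = y * a + x * b"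
proof -
  have "continuous_on K (\<lambda>p. y * fst p + x * snd p)"
    by (intro continuous_intros)
  then obtain p where p: "p \<in> K" "\<And>q. q \<in> K \<Longrightarrow> y * fst p + x * snd p \<le> y * fst q + x * snd q"
    using continuous_attains_inf[OF assms] by blast
  have "linear_envelope K x y = y * fst p + x * snd p"
    unfolding linear_envelope_def
  proof (rule cInf_eq_minimum)
    show "y * fst p + x * snd p \<in> (\<lambda>(a, b). y * a + x * b) ` K"
      using p(1) by (rule rev_image_eqI) (simp add: split_beta)
    show "y * fst p + x * snd p \<le> z" if "z \<in> (\<lambda>(a, b). y * a + x * b) ` K" for z
      using that p(2) by (auto simp: split_beta)
  qed
  then show thesis
    using that[of "fst p" "snd p"] p(1) by simp
qed

lemma linear_envelope_zero_right:
  assumes K: "compact K" "K \<subseteq> {0..} \<times> {0..}" and zero: "(a0, 0) \<in> K" and x: "0 \<le> x"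
  shows "linear_envelope K x 0 = 0"
proof -
  obtain a b where "(a, b) \<in> K" "linear_envelope K x 0 = 0 * a + x * b"
    using linear_envelope_attained[OF K(1), where x = x and y = 0] zero by blast
  then have "0 \<le> linear_envelope K x 0"
    using K(2) x by auto
  then show ?thesis
    using linear_envelope_le[OF K(1) zero, of x 0] by simp
qed

lemma linear_envelope_mono:
  assumes K: "compact K" "K \<subseteq> {0..} \<times> {0..}" "K \<noteq> {}"
    and "0 \<le> x" "x \<le> x'" "0 \<le> y" "y \<le> y'"
  shows "linear_envelope K x y \<le> linear_envelope K x' y'"
proof -
  obtain a b where ab: "(a, b) \<in> K" "linear_envelope K x' y' = y' * a + x' * b"
    using linear_envelope_attained[OF K(1,3), where x = x' and y = y'] by blast
  have "linear_envelope K x y \<le> y * a + x * b"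
    using linear_envelope_le[OF K(1) ab(1)] .
  also have "\<dots> \<le> y' * a + x' * b"
    using assms ab(1) by (intro add_mono mult_right_mono) auto
  finally show ?thesis
    using ab by simp
qed

lemma linear_envelope_superadditive:
  assumes K: "compact K" "K \<noteq> {}"
  shows "linear_envelope K x1 y1 + linear_envelope K x2 y2 \<le> linear_envelope K (x1 + x2) (y1 + y2)"
proof -
  obtain a b where ab: "(a, b) \<in> K"
    "linear_envelope K (x1 + x2) (y1 + y2) = (y1 + y2) * a + (x1 + x2) * b"
    using linear_envelope_attained[OF K, where x = "x1 + x2" and y = "y1 + y2"] by blast
  show ?thesis
    using linear_envelope_le[OF K(1) ab(1), of x1 y1] linear_envelope_le[OF K(1) ab(1), of x2 y2] ab(2)
    by (simp add: algebra_simps)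
qed

lemma linear_envelope_homogeneous:
  assumes K: "compact K" "K \<noteq> {}" and k: "0 < k"
  shows "linear_envelope K (k * x) (k * y) = k * linear_envelope K x y"
proof -
  obtain a b where ab: "(a, b) \<in> K" "linear_envelope K (k * x) (k * y) = (k * y) * a + (k * x) * b"
    using linear_envelope_attained[OF K, where x = "k * x" and y = "k * y"] by blast
  obtain a' b' where ab': "(a', b') \<in> K" "linear_envelope K x y = y * a' + x * b'"
    using linear_envelope_attained[OF K, where x = x and y = y] by blast
  have "k * linear_envelope K x y \<le> linear_envelope K (k * x) (k * y)"
    using mult_left_mono[OF linear_envelope_le[OF K(1) ab(1), of x y], of k] k ab(2)
    by (simp add: algebra_simps)
  moreover have "linear_envelope K (k * x) (k * y) \<le> k * linear_envelope K x y"
    using linear_envelope_le[OF K(1) ab'(1), of "k * x" "k * y"] ab'(2) by (simp add: algebra_simps)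
  ultimately show ?thesis
    by simp
qed

lemma linear_envelope_pos:
  assumes K: "compact K" "K \<subseteq> {0..} \<times> {0..}" "K \<noteq> {}" and no_origin: "(0, 0) \<notin> K"
    and "0 < x" "0 < y"
  shows "0 < linear_envelope K x y"
proof -
  obtain a b where ab: "(a, b) \<in> K" "linear_envelope K x y = y * a + x * b"
    using linear_envelope_attained[OF K(1,3), where x = x and y = y] by blast
  then have "0 \<le> a" "0 \<le> b" "a \<noteq> 0 \<or> b \<noteq> 0"
    using K(2) no_origin by auto
  then show ?thesis
    using ab(2) assms by (auto simp: add_pos_nonneg add_nonneg_pos)
qed

lemma linear_envelope_lipschitz_right:
  assumes K: "compact K" "K \<subseteq> {0..} \<times> {0..}" "K \<noteq> {}"
  shows "\<exists>L\<ge>0. \<forall>x y y'. 0 \<le> x \<longrightarrow> 0 \<le> y \<longrightarrow> y \<le> y' \<longrightarrow>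
    linear_envelope K x y' \<le> linear_envelope K x y + L * (y' - y)"
proof -
  obtain p where p: "p \<in> K" "\<And>q. q \<in> K \<Longrightarrow> fst q \<le> fst p"
    using continuous_attains_sup[OF K(1,3) continuous_on_fst[OF continuous_on_id]] by blast
  have "linear_envelope K x y' \<le> linear_envelope K x y + fst p * (y' - y)" if "y \<le> y'" for x y y'
  proof -
    obtain a b where ab: "(a, b) \<in> K" "linear_envelope K x y = y * a + x * b"
      using linear_envelope_attained[OF K(1,3), where x = x and y = y] by blast
    have "linear_envelope K x y' \<le> linear_envelope K x y + (y' - y) * a"
      using linear_envelope_le[OF K(1) ab(1), of x y'] ab(2) by (simp add: algebra_simps)
    also have "\<dots> \<le> linear_envelope K x y + (y' - y) * fst p"
      using p(2)[OF ab(1)] that by (intro add_left_mono mult_left_mono) auto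
    finally show ?thesis
      by (simp add: mult.commute)
  qed
  moreover have "0 \<le> fst p"
    using p(1) K(2) by auto
  ultimately show ?thesis
    by blast
qed

lemma rate_function_linear_envelope:
  assumes K: "compact K" "K \<subseteq> {0..} \<times> {0..}" and zero: "(a0, 0) \<in> K" and no_origin: "(0, 0) \<notin> K"
  shows "rate_function (linear_envelope K)"
proof -
  have ne: "K \<noteq> {}"
    using zero by auto
  show ?thesis
  proof
    show "linear_envelope K x 0 = 0" if "0 \<le> x" for x
      using linear_envelope_zero_right[OF K zero that] .
    show "linear_envelope K x y \<le> linear_envelope K x' y'"
      if "0 \<le> x" "x \<le> x'" "0 \<le> y" "y \<le> y'" for x x' y y'
      using linear_envelope_mono[OF K ne that] .
    show "linear_envelope K x1 y1 + linear_envelope K x2 y2 \<le> linear_envelope K (x1 + x2) (y1 + y2)"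
      for x1 y1 x2 y2
      using linear_envelope_superadditive[OF K(1) ne] .
    show "linear_envelope K (k * x) (k * y) = k * linear_envelope K x y" if "0 < k" for k x y
      using linear_envelope_homogeneous[OF K(1) ne that] .
    show "0 < linear_envelope K x y" if "0 < x" "0 < y" for x y
      using linear_envelope_pos[OF K ne no_origin that] .
  qed (rule linear_envelope_lipschitz_right[OF K ne])
qed

lemma rateG_eq_linear_envelope:
  "rateG Dv \<Theta> \<theta>s d dst = linear_envelope
     ((\<lambda>(t1, t2). (Dv (\<theta>s d) t1, Dv (\<theta>s dst) t2)) ` {(t1, t2) \<in> \<Theta> \<times> \<Theta>. fst t2 \<le> fst t1})"
proof (intro ext)
  fix x y
  have "{y * Dv (\<theta>s d) t1 + x * Dv (\<theta>s dst) t2 | t1 t2. t1 \<in> \<Theta> \<and> t2 \<in> \<Theta> \<and> fst t2 \<le> fst t1}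
    = (\<lambda>(t1, t2). y * Dv (\<theta>s d) t1 + x * Dv (\<theta>s dst) t2) ` {(t1, t2) \<in> \<Theta> \<times> \<Theta>. fst t2 \<le> fst t1}"
    by fastforce
  then show "rateG Dv \<Theta> \<theta>s d dst x y = linear_envelope
     ((\<lambda>(t1, t2). (Dv (\<theta>s d) t1, Dv (\<theta>s dst) t2)) ` {(t1, t2) \<in> \<Theta> \<times> \<Theta>. fst t2 \<le> fst t1}) x y"
    unfolding rateG_def linear_envelope_def image_image by (simp add: case_prod_beta)
qed

lemma rate_function_rateG:
  fixes \<Theta> :: "(real \<times> 'h::topological_space) set"
  assumes \<Theta>: "compact \<Theta>" and dst_in: "\<theta>s dst \<in> \<Theta>"
    and cont: "continuous_on \<Theta> (Dv (\<theta>s d))" "continuous_on \<Theta> (Dv (\<theta>s dst))"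
    and nonneg: "\<And>t. t \<in> \<Theta> \<Longrightarrow> 0 \<le> Dv (\<theta>s d) t" "\<And>t. t \<in> \<Theta> \<Longrightarrow> 0 \<le> Dv (\<theta>s dst) t"
    and self: "Dv (\<theta>s dst) (\<theta>s dst) = 0"
    and zero_iff: "\<And>t. t \<in> \<Theta> \<Longrightarrow> Dv (\<theta>s d) t = 0 \<Longrightarrow> t = \<theta>s d"
      "\<And>t. t \<in> \<Theta> \<Longrightarrow> Dv (\<theta>s dst) t = 0 \<Longrightarrow> t = \<theta>s dst"
    and less: "fst (\<theta>s d) < fst (\<theta>s dst)"
  shows "rate_function (rateG Dv \<Theta> \<theta>s d dst)"
  unfolding rateG_eq_linear_envelope
proof (rule rate_function_linear_envelope)
  let ?S = "{(t1, t2) \<in> \<Theta> \<times> \<Theta>. fst t2 \<le> fst t1}"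
  have "closed {p :: (real \<times> 'h) \<times> (real \<times> 'h). fst (snd p) \<le> fst (fst p)}"
    by (intro closed_Collect_le continuous_intros)
  then have "compact ((\<Theta> \<times> \<Theta>) \<inter> {p. fst (snd p) \<le> fst (fst p)})"
    using compact_Times[OF \<Theta> \<Theta>] by (rule compact_Int_closed[rotated])
  moreover have "(\<Theta> \<times> \<Theta>) \<inter> {p. fst (snd p) \<le> fst (fst p)} = ?S"
    by auto
  ultimately have "compact ?S"
    by simp
  moreover have "continuous_on ?S (\<lambda>(t1, t2). (Dv (\<theta>s d) t1, Dv (\<theta>s dst) t2))"
    unfolding split_beta by (intro continuous_on_Pair continuous_on_compose2[OF cont(1) continuous_on_fst[OF continuous_on_id]]
        continuous_on_compose2[OF cont(2) continuous_on_snd[OF continuous_on_id]]) auto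
  ultimately show "compact ((\<lambda>(t1, t2). (Dv (\<theta>s d) t1, Dv (\<theta>s dst) t2)) ` ?S)"
    by (rule compact_continuous_image[rotated])
  show "(\<lambda>(t1, t2). (Dv (\<theta>s d) t1, Dv (\<theta>s dst) t2)) ` ?S \<subseteq> {0..} \<times> {0..}"
    using nonneg by auto
  show "(Dv (\<theta>s d) (\<theta>s dst), 0) \<in> (\<lambda>(t1, t2). (Dv (\<theta>s d) t1, Dv (\<theta>s dst) t2)) ` ?S"
    using dst_in self by (intro image_eqI[of _ _ "(\<theta>s dst, \<theta>s dst)"]) auto
  show "(0, 0) \<notin> (\<lambda>(t1, t2). (Dv (\<theta>s d) t1, Dv (\<theta>s dst) t2)) ` ?S"
  proof
    assume "(0, 0) \<in> (\<lambda>(t1, t2). (Dv (\<theta>s d) t1, Dv (\<theta>s dst) t2)) ` ?S"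
    then obtain t1 t2 where "t1 \<in> \<Theta>" "t2 \<in> \<Theta>" "fst t2 \<le> fst t1"
      and "Dv (\<theta>s d) t1 = 0" "Dv (\<theta>s dst) t2 = 0"
      by auto
    then have "t1 = \<theta>s d" "t2 = \<theta>s dst"
      using zero_iff by blast+
    then show False
      using \<open>fst t2 \<le> fst t1\<close> less by simp
  qed
qed

section \<open>Equalizing concave rates on a simplex\<close>

definition weights_on :: "'i set \<Rightarrow> real \<Rightarrow> ('i \<Rightarrow> real) set" where
  "weights_on I s = {\<beta>. (\<forall>i\<in>I. 0 \<le> \<beta> i) \<and> sum \<beta> I = s}"

lemma weights_on_le:
  assumes "finite I" "\<beta> \<in> weights_on I s" "i \<in> I"
  shows "\<beta> i \<in> {0..s}"
  using assms member_le_sum[of i I \<beta>] unfolding weights_on_def by auto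

lemma weights_on_limit:
  assumes "finite I" "\<And>n. X n \<in> weights_on I s" "\<And>i. i \<in> I \<Longrightarrow> (\<lambda>n. X n i) \<longlonglongrightarrow> l i"
  shows "l \<in> weights_on I s"
proof -
  have "0 \<le> l i" if "i \<in> I" for i
    using assms(2) that unfolding weights_on_def by (intro LIMSEQ_le_const[OF assms(3)[OF that]]) auto
  moreover have "(\<lambda>n. \<Sum>i\<in>I. X n i) \<longlonglongrightarrow> sum l I"
    using assms(3) by (intro tendsto_sum) auto
  then have "sum l I = s"
    using assms(2) unfolding weights_on_def by (simp add: LIMSEQ_const_iff)
  ultimately show ?thesis
    unfolding weights_on_def by auto
qed

lemma convergent_subseq_finite_coordinates:
  fixes X :: "nat \<Rightarrow> 'i \<Rightarrow> real"
  assumes "finite I" "\<And>n i. i \<in> I \<Longrightarrow> X n i \<in> {a..b}"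
  obtains r l where "strict_mono r" "\<And>i. i \<in> I \<Longrightarrow> (\<lambda>n. X (r n) i) \<longlonglongrightarrow> l i"
proof -
  have "\<exists>r l. strict_mono r \<and> (\<forall>i\<in>I. (\<lambda>n. X (r n) i) \<longlonglongrightarrow> l i)"
    using assms
  proof (induction I rule: finite_induct)
    case empty
    then show ?case
      by (intro exI[of _ id]) (auto simp: strict_mono_def)
  next
    case (insert j I)
    then obtain r l where r: "strict_mono r" "\<forall>i\<in>I. (\<lambda>n. X (r n) i) \<longlonglongrightarrow> l i"
      by blast
    have "\<forall>n. X (r n) j \<in> {a..b}"
      using insert.prems by simp
    then obtain lj r' where r': "strict_mono r'" "((\<lambda>n. X (r n) j) \<circ> r') \<longlonglongrightarrow> lj"
      using seq_compactE[OF compact_imp_seq_compact[OF compact_Icc]] by metis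
    have "(\<lambda>n. X ((r \<circ> r') n) i) \<longlonglongrightarrow> (l(j := lj)) i" if "i \<in> insert j I" for i
    proof (cases "i = j")
      case True
      then show ?thesis
        using r' by (simp add: o_def)
    next
      case False
      then have "((\<lambda>n. X (r n) i) \<circ> r') \<longlonglongrightarrow> l i"
        using that r r' by (intro LIMSEQ_subseq_LIMSEQ) auto
      then show ?thesis
        using False by (simp add: o_def)
    qed
    moreover have "strict_mono (r \<circ> r')"
      using r r' by (intro strict_mono_o)
    ultimately show ?case
      by blast
  qed
  then show thesis
    using that by blast
qed

lemma bdd_above_Min_on_weights:
  fixes g :: "'i \<Rightarrow> real \<Rightarrow> real"
  assumes fin: "finite I" and i0: "i0 \<in> I" and s: "0 \<le> s"
    and cont: "continuous_on {0..} (g i0)"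
  shows "bdd_above ((\<lambda>\<beta>. Min ((\<lambda>i. g i (\<beta> i)) ` I)) ` weights_on I s)"
proof -
  have "\<exists>t\<in>{0..s}. \<forall>y\<in>{0..s}. g i0 y \<le> g i0 t"
    using s by (intro continuous_attains_sup continuous_on_subset[OF cont]) auto
  then obtain t where t: "\<And>y. y \<in> {0..s} \<Longrightarrow> g i0 y \<le> g i0 t"
    by blast
  show ?thesis
  proof (rule bdd_aboveI2)
    fix \<beta> assume "\<beta> \<in> weights_on I s"
    then have "g i0 (\<beta> i0) \<le> g i0 t"
      using t weights_on_le[OF fin _ i0] by blast
    moreover have "Min ((\<lambda>i. g i (\<beta> i)) ` I) \<le> g i0 (\<beta> i0)"
      using fin i0 by (intro Min_le) auto
    ultimately show "Min ((\<lambda>i. g i (\<beta> i)) ` I) \<le> g i0 t"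
      by linarith
  qed
qed

lemma weights_on_limit_above:
  fixes g :: "'i \<Rightarrow> real \<Rightarrow> real"
  assumes fin: "finite I" and cont: "\<And>i. i \<in> I \<Longrightarrow> continuous_on {0..} (g i)"
    and X: "\<And>n. X n \<in> weights_on I s" "\<And>n i. i \<in> I \<Longrightarrow> V - 1 / Suc n < g i (X n i)"
  shows "\<exists>l\<in>weights_on I s. \<forall>i\<in>I. V \<le> g i (l i)"
proof -
  have X_bounded: "\<And>n i. i \<in> I \<Longrightarrow> X n i \<in> {0..s}"
    using weights_on_le[OF fin X(1)] by blast
  obtain r l where r: "strict_mono r" "\<And>i. i \<in> I \<Longrightarrow> (\<lambda>n. X (r n) i) \<longlonglongrightarrow> l i"
    using convergent_subseq_finite_coordinates[where X = X, OF fin X_bounded] by blast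
  have l: "l \<in> weights_on I s"
    using weights_on_limit[OF fin X(1) r(2)] .
  have "V \<le> g i (l i)" if i: "i \<in> I" for i
  proof (rule LIMSEQ_le)
    show "(\<lambda>n. V - 1 / Suc n) \<longlonglongrightarrow> V"
      using tendsto_diff[OF tendsto_const LIMSEQ_inverse_real_of_nat, of V] by (simp add: divide_inverse)
    show "(\<lambda>n. g i (X (r n) i)) \<longlonglongrightarrow> g i (l i)"
      using i r(2) X_bounded weights_on_le[OF fin l i]
      by (intro continuous_on_tendsto_compose[OF cont[OF i]]) auto
    have "V - 1 / Suc n \<le> g i (X (r n) i)" for n
    proof -
      have "1 / real (Suc (r n)) \<le> 1 / Suc n"
        using seq_suble[OF r(1), of n] by (intro divide_left_mono) auto
      then show ?thesis
        using X(2)[OF i, of "r n"] by linarith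
    qed
    then show "\<exists>N. \<forall>n\<ge>N. V - 1 / Suc n \<le> g i (X (r n) i)"
      by blast
  qed
  then show ?thesis
    using l by blast
qed

lemma Min_on_weights_attains_max:
  fixes g :: "'i \<Rightarrow> real \<Rightarrow> real"
  assumes fin: "finite I" and ne: "I \<noteq> {}" and s: "0 \<le> s"
    and cont: "\<And>i. i \<in> I \<Longrightarrow> continuous_on {0..} (g i)"
  shows "\<exists>l\<in>weights_on I s. \<forall>\<beta>\<in>weights_on I s.
    Min ((\<lambda>i. g i (\<beta> i)) ` I) \<le> Min ((\<lambda>i. g i (l i)) ` I)"
proof -
  define \<Phi> where "\<Phi> \<beta> = Min ((\<lambda>i. g i (\<beta> i)) ` I)" for \<beta>
  obtain i0 where i0: "i0 \<in> I"
    using ne by blast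
  have bdd: "bdd_above (\<Phi> ` weights_on I s)"
    unfolding \<Phi>_def using bdd_above_Min_on_weights[where g = g, OF fin i0 s cont[OF i0]] .
  define V where "V = Sup (\<Phi> ` weights_on I s)"
  have "(\<lambda>i. s / card I) \<in> weights_on I s"
    using s fin ne unfolding weights_on_def by auto
  then have "\<exists>\<beta>\<in>weights_on I s. V - 1 / Suc n < \<Phi> \<beta>" for n
    using less_cSup_iff[OF _ bdd, of "V - 1 / Suc n"] unfolding V_def by auto
  then have "\<forall>n. \<exists>\<beta>. \<beta> \<in> weights_on I s \<and> V - 1 / Suc n < \<Phi> \<beta>"
    by blast
  from choice[OF this] obtain X where X: "\<And>n. X n \<in> weights_on I s" "\<And>n. V - 1 / Suc n < \<Phi> (X n)"
    by blast
  have "\<Phi> (X n) \<le> g i (X n i)" if "i \<in> I" for n i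
    unfolding \<Phi>_def using fin that by (intro Min_le) auto
  then have "V - 1 / Suc n < g i (X n i)" if "i \<in> I" for n i
    using X(2)[of n] that by (meson less_le_trans)
  then obtain l where l: "l \<in> weights_on I s" "\<And>i. i \<in> I \<Longrightarrow> V \<le> g i (l i)"
    using weights_on_limit_above[where g = g and V = V and X = X and I = I and s = s, OF fin cont X(1)] by blast
  then have "V \<le> \<Phi> l"
    unfolding \<Phi>_def using fin ne by (simp add: Min_ge_iff)
  moreover have "\<Phi> \<beta> \<le> V" if "\<beta> \<in> weights_on I s" for \<beta>
    unfolding V_def using bdd that by (intro cSup_upper) auto
  ultimately show ?thesis
    using l(1) unfolding \<Phi>_def by (meson order_trans)
qed

lemma slack_absorbed_by_some_coordinate:
  fixes g :: "'i \<Rightarrow> real \<Rightarrow> real"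
  assumes fin: "finite I" and ne: "I \<noteq> {}"
    and max: "\<And>\<beta>. \<beta> \<in> weights_on I s \<Longrightarrow> Min ((\<lambda>i. g i (\<beta> i)) ` I) \<le> m"
    and y: "\<And>i. i \<in> I \<Longrightarrow> 0 \<le> y i" "\<And>i. i \<in> I \<Longrightarrow> g i (y i) = m"
    and \<sigma>: "0 \<le> \<sigma>" "sum y I + \<sigma> = s"
    and concave: "\<And>i a b t. i \<in> I \<Longrightarrow> 0 \<le> a \<Longrightarrow> 0 \<le> b \<Longrightarrow> 0 \<le> t \<Longrightarrow> t \<le> 1 \<Longrightarrow>
      (1 - t) * g i a + t * g i b \<le> g i ((1 - t) * a + t * b)"
  shows "\<exists>j\<in>I. g j (y j + \<sigma>) \<le> m"
proof (rule ccontr)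
  assume "\<not> ?thesis"
  then have gt: "\<And>j. j \<in> I \<Longrightarrow> m < g j (y j + \<sigma>)"
    by auto
  define t where "t = 1 / real (card I)"
  have "1 \<le> card I"
    using fin ne by (simp add: Suc_le_eq card_gt_0_iff)
  then have t: "0 < t" "t \<le> 1"
    unfolding t_def by auto
  define \<beta> where "\<beta> i = (1 - t) * y i + t * (y i + \<sigma>)" for i
  have "sum \<beta> I = sum y I + real (card I) * t * \<sigma>"
    unfolding \<beta>_def by (simp add: algebra_simps sum.distrib sum_distrib_left)
  then have "\<beta> \<in> weights_on I s"
    using y(1) \<sigma> t fin ne unfolding weights_on_def \<beta>_def t_def by (auto simp: card_gt_0_iff)
  then have "Min ((\<lambda>i. g i (\<beta> i)) ` I) \<le> m"
    by (rule max)
  moreover obtain i where i: "i \<in> I" "Min ((\<lambda>i. g i (\<beta> i)) ` I) = g i (\<beta> i)"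
    using Min_in[of "(\<lambda>i. g i (\<beta> i)) ` I"] fin ne by fastforce
  moreover have "m < (1 - t) * g i (y i) + t * g i (y i + \<sigma>)"
    using gt[OF i(1)] y(2)[OF i(1)] t by (simp add: algebra_simps)
  moreover have "(1 - t) * g i (y i) + t * g i (y i + \<sigma>) \<le> g i (\<beta> i)"
    unfolding \<beta>_def using concave[OF i(1)] y(1)[OF i(1)] \<sigma>(1) t by simp
  ultimately show False
    by linarith
qed

lemma equal_values_on_weights:
  fixes g :: "'i \<Rightarrow> real \<Rightarrow> real"
  assumes fin: "finite I" and ne: "I \<noteq> {}" and s: "0 < s"
    and zero: "\<And>i. i \<in> I \<Longrightarrow> g i 0 = 0"
    and mono: "\<And>i y y'. i \<in> I \<Longrightarrow> 0 \<le> y \<Longrightarrow> y \<le> y' \<Longrightarrow> g i y \<le> g i y'"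
    and concave: "\<And>i a b t. i \<in> I \<Longrightarrow> 0 \<le> a \<Longrightarrow> 0 \<le> b \<Longrightarrow> 0 \<le> t \<Longrightarrow> t \<le> 1 \<Longrightarrow>
      (1 - t) * g i a + t * g i b \<le> g i ((1 - t) * a + t * b)"
    and cont: "\<And>i. i \<in> I \<Longrightarrow> continuous_on {0..} (g i)"
    and pos: "\<And>i y. i \<in> I \<Longrightarrow> 0 < y \<Longrightarrow> 0 < g i y"
  shows "\<exists>\<beta> m. \<beta> \<in> weights_on I s \<and> 0 < m \<and> (\<forall>i\<in>I. g i (\<beta> i) = m)"
proof -
  obtain l where l: "l \<in> weights_on I s"
    and max: "\<And>\<beta>. \<beta> \<in> weights_on I s \<Longrightarrow> Min ((\<lambda>i. g i (\<beta> i)) ` I) \<le> Min ((\<lambda>i. g i (l i)) ` I)"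
    using Min_on_weights_attains_max[where g = g, OF fin ne less_imp_le[OF s] cont] by blast
  define m where "m = Min ((\<lambda>i. g i (l i)) ` I)"
  have m_le: "m \<le> g i (l i)" if "i \<in> I" for i
    unfolding m_def using fin that by (intro Min_le) auto
  have "(\<lambda>i. s / card I) \<in> weights_on I s"
    using s fin ne unfolding weights_on_def by auto
  moreover have "0 < Min ((\<lambda>i. g i (s / card I)) ` I)"
    using fin ne s pos by (simp add: Min_gr_iff card_gt_0_iff)
  ultimately have m: "0 < m"
    using max unfolding m_def by (meson less_le_trans)
  have "\<exists>y. 0 \<le> y \<and> y \<le> l i \<and> g i y = m" if i: "i \<in> I" for i
    using l i m m_le[OF i] zero[OF i]
    by (intro IVT' continuous_on_subset[OF cont[OF i]]) (auto simp: weights_on_def)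
  then have "\<forall>i\<in>I. \<exists>y. 0 \<le> y \<and> y \<le> l i \<and> g i y = m"
    by blast
  from bchoice[OF this] obtain y where y: "\<And>i. i \<in> I \<Longrightarrow> 0 \<le> y i \<and> y i \<le> l i \<and> g i (y i) = m"
    by blast
  define \<sigma> where "\<sigma> = s - sum y I"
  have "sum y I \<le> sum l I"
    using y by (intro sum_mono) auto
  then have \<sigma>: "0 \<le> \<sigma>" "sum y I + \<sigma> = s"
    using l unfolding \<sigma>_def weights_on_def by auto
  obtain j where j: "j \<in> I" "g j (y j + \<sigma>) \<le> m"
    using slack_absorbed_by_some_coordinate[where g = g and y = y and m = m, OF fin ne _ _ _ \<sigma> concave] max y
    unfolding m_def by blast
  define \<beta> where "\<beta> i = y i + (if i = j then \<sigma> else 0)" for i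
  have "\<beta> \<in> weights_on I s"
    using y \<sigma> fin j(1) unfolding weights_on_def \<beta>_def by (simp add: sum.distrib)
  moreover have "g i (\<beta> i) = m" if "i \<in> I" for i
    using y[OF that] j mono[OF j(1), of "y j" "y j + \<sigma>"] y[OF j(1)] \<sigma>(1)
    unfolding \<beta>_def by (cases "i = j") auto
  ultimately show ?thesis
    using m by blast
qed

section \<open>Kullback-Leibler divergence\<close>

lemma KL_integrand_nonneg:
  fixes f g :: real
  assumes "0 \<le> f" "0 \<le> g" "g = 0 \<longrightarrow> f = 0"
  shows "0 \<le> f * ln (f / g) - (f - g)" and "f * ln (f / g) - (f - g) = 0 \<Longrightarrow> f = g"
proof -
  have "0 \<le> f * ln (f / g) - (f - g) \<and> (f * ln (f / g) - (f - g) = 0 \<longrightarrow> f = g)"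
  proof (cases "f = 0")
    case True
    then show ?thesis
      using assms by auto
  next
    case False
    then have f: "0 < f" and g: "0 < g"
      using assms by auto
    define r where "r = g / f"
    have r: "0 < r"
      unfolding r_def using f g by auto
    have "ln (f / g) = - ln r"
      unfolding r_def using f g by (simp add: ln_div)
    then have eq: "f * ln (f / g) - (f - g) = f * (r - 1 - ln r)"
      unfolding r_def using f by (simp add: field_simps)
    have "ln r \<le> r - 1"
      using r by (rule ln_le_minus_one)
    moreover have "r = 1" if "ln r = r - 1"
      using ln_eq_minus_one r that by blast
    ultimately show ?thesis
      using eq f unfolding r_def by (auto simp: mult_le_0_iff)
  qed
  then show "0 \<le> f * ln (f / g) - (f - g)" and "f * ln (f / g) - (f - g) = 0 \<Longrightarrow> f = g"
    by auto
qed

text \<open>Gibbs' inequality: adding \<open>p b - p a\<close>, which integrates to zero, makes the integrand of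
  \<open>KL \<nu> p a b\<close> pointwise nonnegative.\<close>

lemma KL_nonneg_and_eq_0:
  fixes \<nu> :: "'y measure" and p :: "'p \<Rightarrow> 'y \<Rightarrow> real"
  assumes meas: "p a \<in> borel_measurable \<nu>" "p b \<in> borel_measurable \<nu>"
    and nonneg: "\<forall>y\<in>space \<nu>. 0 \<le> p a y" "\<forall>y\<in>space \<nu>. 0 \<le> p b y"
    and prob: "integrable \<nu> (p a)" "(\<integral>y. p a y \<partial>\<nu>) = 1" "integrable \<nu> (p b)" "(\<integral>y. p b y \<partial>\<nu>) = 1"
    and ac: "AE y in \<nu>. p b y = 0 \<longrightarrow> p a y = 0"
    and int: "integrable \<nu> (\<lambda>y. p a y * ln (p a y / p b y))"
  shows "0 \<le> KL \<nu> p a b" and "KL \<nu> p a b = 0 \<Longrightarrow> AE y in \<nu>. p a y = p b y"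
proof -
  define h where "h y = p a y * ln (p a y / p b y) - (p a y - p b y)" for y
  have h_int: "integrable \<nu> h"
    unfolding h_def using int prob by auto
  have "integral\<^sup>L \<nu> h = KL \<nu> p a b"
    unfolding h_def KL_def using int prob by (simp add: Bochner_Integration.integral_diff)
  moreover have pointwise: "AE y in \<nu>. 0 \<le> h y \<and> (h y = 0 \<longrightarrow> p a y = p b y)"
    using ac
  proof (rule AE_mp, intro AE_I2 impI)
    fix y assume "y \<in> space \<nu>" "p b y = 0 \<longrightarrow> p a y = 0"
    then show "0 \<le> h y \<and> (h y = 0 \<longrightarrow> p a y = p b y)"
      unfolding h_def using KL_integrand_nonneg[of "p a y" "p b y"] nonneg by auto
  qed
  moreover have h_nonneg: "AE y in \<nu>. 0 \<le> h y"
    using pointwise by eventually_elim auto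
  ultimately show "0 \<le> KL \<nu> p a b"
    using integral_nonneg_AE by metis
  assume "KL \<nu> p a b = 0"
  then have "AE y in \<nu>. h y = 0"
    using integral_nonneg_eq_0_iff_AE[OF h_int h_nonneg] \<open>integral\<^sup>L \<nu> h = KL \<nu> p a b\<close> by simp
  then show "AE y in \<nu>. p a y = p b y"
    using pointwise by eventually_elim auto
qed

lemma KL_identifiable_family:
  fixes \<nu> :: "'y measure" and p :: "'p \<Rightarrow> 'y \<Rightarrow> real"
  assumes meas: "\<forall>\<theta>\<in>\<Theta>. p \<theta> \<in> borel_measurable \<nu>"
    and nonneg: "\<forall>\<theta>\<in>\<Theta>. \<forall>y\<in>space \<nu>. 0 \<le> p \<theta> y"
    and prob: "\<forall>\<theta>\<in>\<Theta>. integrable \<nu> (p \<theta>) \<and> (\<integral>y. p \<theta> y \<partial>\<nu>) = 1"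
    and ident: "\<forall>\<theta>\<in>\<Theta>. \<forall>\<theta>'\<in>\<Theta>. \<theta> \<noteq> \<theta>' \<longrightarrow> density \<nu> (p \<theta>) \<noteq> density \<nu> (p \<theta>')"
    and a: "a \<in> \<Theta>"
    and finite: "\<forall>\<theta>\<in>\<Theta>. (AE y in \<nu>. p \<theta> y = 0 \<longrightarrow> p a y = 0) \<and>
      integrable \<nu> (\<lambda>y. p a y * ln (p a y / p \<theta> y))"
    and t: "t \<in> \<Theta>"
  shows "0 \<le> KL \<nu> p a t" and "KL \<nu> p a t = 0 \<Longrightarrow> t = a"
proof -
  note KL = KL_nonneg_and_eq_0[of p a \<nu> t]
  show "0 \<le> KL \<nu> p a t"
    using KL(1) meas nonneg prob finite a t by blast
  assume "KL \<nu> p a t = 0"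
  then have "AE y in \<nu>. p a y = p t y"
    using KL(2) meas nonneg prob finite a t by blast
  then have "density \<nu> (p a) = density \<nu> (p t)"
    using meas a t by (intro density_cong) auto
  then show "t = a"
    using ident a t by metis
qed

lemma KL_self: "KL \<nu> p a a = 0"
proof -
  have "(\<lambda>y. p a y * ln (p a y / p a y)) = (\<lambda>y. 0)"
  proof
    show "p a y * ln (p a y / p a y) = 0" for y
      by (cases "p a y = 0") auto
  qed
  then show ?thesis
    unfolding KL_def by simp
qed

lemma rate_function_KL_rateG:
  fixes \<Theta> :: "(real \<times> 'h::real_normed_vector) set" and \<nu> :: "'y measure"
    and p :: "real \<times> 'h \<Rightarrow> 'y \<Rightarrow> real"
  assumes \<Theta>: "compact \<Theta>"
    and meas: "\<forall>\<theta>\<in>\<Theta>. p \<theta> \<in> borel_measurable \<nu>"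
    and nonneg: "\<forall>\<theta>\<in>\<Theta>. \<forall>y\<in>space \<nu>. 0 \<le> p \<theta> y"
    and prob: "\<forall>\<theta>\<in>\<Theta>. integrable \<nu> (p \<theta>) \<and> (\<integral>y. p \<theta> y \<partial>\<nu>) = 1"
    and ident: "\<forall>\<theta>\<in>\<Theta>. \<forall>\<theta>'\<in>\<Theta>. \<theta> \<noteq> \<theta>' \<longrightarrow> density \<nu> (p \<theta>) \<noteq> density \<nu> (p \<theta>')"
    and E: "d \<in> E" "dst \<in> E" and params: "\<forall>e\<in>E. \<theta>s e \<in> \<Theta>"
    and finite: "\<forall>e\<in>E. \<forall>\<theta>\<in>\<Theta>. (AE y in \<nu>. p \<theta> y = 0 \<longrightarrow> p (\<theta>s e) y = 0) \<and>
      integrable \<nu> (\<lambda>y. p (\<theta>s e) y * ln (p (\<theta>s e) y / p \<theta> y))"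
    and diff: "\<forall>e\<in>E. \<exists>D'. \<forall>\<theta>\<in>\<Theta>.
      (KL \<nu> p (\<theta>s e) has_derivative blinfun_apply (D' \<theta>)) (at \<theta> within \<Theta>)"
    and less: "fst (\<theta>s d) < fst (\<theta>s dst)"
  shows "rate_function (rateG (KL \<nu> p) \<Theta> \<theta>s d dst)"
proof -
  have KL: "continuous_on \<Theta> (KL \<nu> p (\<theta>s e))" "\<And>t. t \<in> \<Theta> \<Longrightarrow> 0 \<le> KL \<nu> p (\<theta>s e) t"
    "\<And>t. t \<in> \<Theta> \<Longrightarrow> KL \<nu> p (\<theta>s e) t = 0 \<Longrightarrow> t = \<theta>s e" if e: "e \<in> E" for e
  proof -
    note KL = KL_identifiable_family[OF meas nonneg prob ident bspec[OF params e] bspec[OF finite e]]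
    obtain D' where "\<forall>\<theta>\<in>\<Theta>. (KL \<nu> p (\<theta>s e) has_derivative blinfun_apply (D' \<theta>)) (at \<theta> within \<Theta>)"
      using diff e by blast
    then show "continuous_on \<Theta> (KL \<nu> p (\<theta>s e))"
      by (intro has_derivative_continuous_on[where f' = "\<lambda>\<theta>. blinfun_apply (D' \<theta>)"]) blast
    show "0 \<le> KL \<nu> p (\<theta>s e) t" if "t \<in> \<Theta>" for t
      using KL(1)[OF that] .
    show "t = \<theta>s e" if "t \<in> \<Theta>" "KL \<nu> p (\<theta>s e) t = 0" for t
      using KL(2)[OF that] .
  qed
  show ?thesis
    by (rule rate_function_rateG[where Dv = "KL \<nu> p" and \<theta>s = \<theta>s and d = d and dst = dst,
          OF \<Theta> bspec[OF params E(2)] KL(1)[OF E(1)] KL(1)[OF E(2)] KL(2)[OF E(1)] KL(2)[OF E(2)]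
          KL_self KL(3)[OF E(1)] KL(3)[OF E(2)] less])
qed

lemma best_greatest:
  fixes mu :: "'d \<Rightarrow> real"
  assumes "finite S" "S \<noteq> {}"
  shows "best mu S \<in> S" and "d \<in> S \<Longrightarrow> mu d \<le> mu (best mu S)"
proof -
  have "Max (mu ` S) \<in> mu ` S"
    using assms by simp
  then obtain x where x: "x \<in> S" "mu x = Max (mu ` S)"
    by auto
  then have x_max: "\<forall>y\<in>S. mu y \<le> mu x"
    using assms by auto
  have "best mu S \<in> S \<and> (\<forall>d\<in>S. mu d \<le> mu (best mu S))"
    unfolding best_def
  proof (rule arg_maxI[where P = "\<lambda>d. d \<in> S" and x = x])
    show "\<not> mu y > mu x" if "y \<in> S" for y
      using x_max that by auto
    show "z \<in> S \<and> (\<forall>d\<in>S. mu d \<le> mu z)" if "z \<in> S" "\<forall>y. y \<in> S \<longrightarrow> \<not> mu y > mu z" for z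
      using that by auto
  qed (rule x(1))
  then show "best mu S \<in> S" and "d \<in> S \<Longrightarrow> mu d \<le> mu (best mu S)"
    by auto
qed

lemma best_strictly_greatest:
  fixes mu :: "'d \<Rightarrow> real"
  assumes fin: "finite S" and two: "2 \<le> card S" and inj: "inj_on mu S"
  shows "best mu S \<in> S" and "S - {best mu S} \<noteq> {}"
    and "d \<in> S - {best mu S} \<Longrightarrow> mu d < mu (best mu S)"
proof -
  have "S \<noteq> {}"
    using two by auto
  note best = best_greatest[where mu = mu, OF fin this]
  show "best mu S \<in> S"
    by (fact best(1))
  have "card (S - {best mu S}) = card S - 1"
    by (rule card_Diff_singleton[OF best(1)])
  then have "card (S - {best mu S}) \<noteq> 0"
    using two by simp
  then show "S - {best mu S} \<noteq> {}"
    by (metis card.empty)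
  assume d: "d \<in> S - {best mu S}"
  then have "mu d \<noteq> mu (best mu S)"
    using inj_onD[OF inj, of d "best mu S"] best(1) by blast
  then show "mu d < mu (best mu S)"
    using best(2)[of d] d by auto
qed

section \<open>The allocation problems\<close>

lemma sum_eq_imp_ex_le:
  fixes f g :: "'a \<Rightarrow> real"
  assumes "finite A" "A \<noteq> {}" "sum f A = sum g A"
  shows "\<exists>a\<in>A. f a \<le> g a"
proof (rule ccontr)
  assume "\<not> ?thesis"
  then have "sum g A < sum f A"
    using assms(1,2) by (intro sum_strict_mono) (auto simp: not_le)
  then show False
    using assms(3) by simp
qed

lemma sum_Sigma_move_mass:
  fixes w :: "'c \<Rightarrow> 'd \<Rightarrow> real"
  assumes fin: "finite C" "\<And>c. c \<in> C \<Longrightarrow> finite (Dc c)" and p0: "c0 \<in> C" "d0 \<in> Dc c0"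
  shows "(\<Sum>c\<in>C. \<Sum>e\<in>Dc c. w c e - (if (c, e) = (c0, d0) then \<epsilon> else 0) + \<epsilon> / card (SIGMA c:C. Dc c))
    = (\<Sum>c\<in>C. \<Sum>e\<in>Dc c. w c e)"
proof -
  let ?P = "SIGMA c:C. Dc c"
  have "finite ?P" "(c0, d0) \<in> ?P"
    using fin p0 by auto
  then have "card ?P \<noteq> 0"
    by auto
  have "(\<Sum>p\<in>?P. case_prod w p - (if p = (c0, d0) then \<epsilon> else 0) + \<epsilon> / card ?P) = sum (case_prod w) ?P"
    using \<open>finite ?P\<close> \<open>(c0, d0) \<in> ?P\<close> \<open>card ?P \<noteq> 0\<close> by (simp add: sum.distrib sum_subtractf)
  then show ?thesis
    using fin by (simp add: sum.Sigma split_beta prod_eq_iff)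
qed

lemma objU_eq_objG: "objU C U dst R \<alpha> \<beta> = objG C U R (\<lambda>c. \<beta> c (dst c)) \<alpha> \<beta>"
  unfolding objU_def objG_def ..

locale rate_family =
  fixes C :: "'c set" and U :: "'c \<Rightarrow> 'd set" and R :: "'c \<Rightarrow> 'd \<Rightarrow> real \<Rightarrow> real \<Rightarrow> real"
  assumes finite_C: "finite C" and C_ne: "C \<noteq> {}"
    and finite_U: "c \<in> C \<Longrightarrow> finite (U c)" and U_ne: "c \<in> C \<Longrightarrow> U c \<noteq> {}"
    and rate_function_R: "c \<in> C \<Longrightarrow> d \<in> U c \<Longrightarrow> rate_function (R c d)"
begin

lemma objG_attained: "\<exists>c\<in>C. \<exists>d\<in>U c. objG C U R \<gamma> \<alpha> \<beta> = \<alpha> c * R c d (\<gamma> c) (\<beta> c d)"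
proof -
  have "objG C U R \<gamma> \<alpha> \<beta> \<in> (\<lambda>c. \<alpha> c * Min ((\<lambda>d. R c d (\<gamma> c) (\<beta> c d)) ` U c)) ` C"
    unfolding objG_def using finite_C C_ne by (intro Min_in) auto
  then obtain c where c: "c \<in> C" "objG C U R \<gamma> \<alpha> \<beta> = \<alpha> c * Min ((\<lambda>d. R c d (\<gamma> c) (\<beta> c d)) ` U c)"
    by blast
  have "Min ((\<lambda>d. R c d (\<gamma> c) (\<beta> c d)) ` U c) \<in> (\<lambda>d. R c d (\<gamma> c) (\<beta> c d)) ` U c"
    using finite_U[OF c(1)] U_ne[OF c(1)] by (intro Min_in) auto
  then show ?thesis
    using c by force
qed

lemma objG_le:
  assumes "c \<in> C" "d \<in> U c" "0 \<le> \<alpha> c"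
  shows "objG C U R \<gamma> \<alpha> \<beta> \<le> \<alpha> c * R c d (\<gamma> c) (\<beta> c d)"
proof -
  have "objG C U R \<gamma> \<alpha> \<beta> \<le> \<alpha> c * Min ((\<lambda>d. R c d (\<gamma> c) (\<beta> c d)) ` U c)"
    unfolding objG_def using assms finite_C by (intro Min_le) auto
  also have "\<dots> \<le> \<alpha> c * R c d (\<gamma> c) (\<beta> c d)"
    using assms finite_U by (intro mult_left_mono Min_le) auto
  finally show ?thesis .
qed

lemma objG_eq_if_equalized:
  assumes "\<And>c d. c \<in> C \<Longrightarrow> d \<in> U c \<Longrightarrow> \<alpha> c * R c d (\<gamma> c) (\<beta> c d) = z"
  shows "objG C U R \<gamma> \<alpha> \<beta> = z"
  using objG_attained[of \<gamma> \<alpha> \<beta>] assms by force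

lemma optG_if_equalized:
  assumes \<gamma>: "\<And>c. c \<in> C \<Longrightarrow> 0 \<le> \<gamma> c" and feas: "feasG C U \<gamma> \<alpha> \<beta>"
    and eq: "\<And>c d. c \<in> C \<Longrightarrow> d \<in> U c \<Longrightarrow> \<alpha> c * R c d (\<gamma> c) (\<beta> c d) = z"
  shows "optG C U R \<gamma> \<alpha> \<beta>"
  unfolding optG_def
proof (intro conjI allI impI feas)
  fix \<alpha>' \<beta>' assume feas': "feasG C U \<gamma> \<alpha>' \<beta>'"
  obtain c where c: "c \<in> C" "\<alpha>' c \<le> \<alpha> c"
    using sum_eq_imp_ex_le[OF finite_C C_ne, of \<alpha>' \<alpha>] feas feas' unfolding feasG_def by auto
  obtain d where d: "d \<in> U c" "\<beta>' c d \<le> \<beta> c d"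
    using sum_eq_imp_ex_le[OF finite_U[OF c(1)] U_ne[OF c(1)], of "\<beta>' c" "\<beta> c"] feas feas' c(1)
    unfolding feasG_def by auto
  interpret rate_function "R c d"
    using rate_function_R[OF c(1) d(1)] .
  have weights_nonneg: "0 \<le> \<alpha>' c" "0 \<le> \<alpha> c" "0 \<le> \<beta>' c d"
    using feas feas' c(1) d(1) unfolding feasG_def by auto
  have "objG C U R \<gamma> \<alpha>' \<beta>' \<le> \<alpha>' c * R c d (\<gamma> c) (\<beta>' c d)"
    using objG_le[where \<alpha> = \<alpha>', OF c(1) d(1) weights_nonneg(1)] .
  also have "\<dots> \<le> \<alpha> c * R c d (\<gamma> c) (\<beta> c d)"
    using c(2) d(2) weights_nonneg \<gamma>[OF c(1)] by (intro mult_mono mono nonneg) auto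
  also have "\<dots> = objG C U R \<gamma> \<alpha> \<beta>"
    using objG_eq_if_equalized[of \<alpha> \<gamma> \<beta> z] eq c(1) d(1) by simp
  finally show "objG C U R \<gamma> \<alpha>' \<beta>' \<le> objG C U R \<gamma> \<alpha> \<beta>" .
qed

lemma equalized_weights_in_context:
  assumes c: "c \<in> C" and \<gamma>: "0 < \<gamma> c" "\<gamma> c < 1"
  shows "\<exists>b m. b \<in> weights_on (U c) (1 - \<gamma> c) \<and> 0 < m \<and> (\<forall>d\<in>U c. R c d (\<gamma> c) (b d) = m)"
proof (rule equal_values_on_weights[where g = "\<lambda>d. R c d (\<gamma> c)", OF finite_U[OF c] U_ne[OF c]])
  have rf: "\<And>d. d \<in> U c \<Longrightarrow> rate_function (R c d)"
    using rate_function_R[OF c] .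
  show "0 < 1 - \<gamma> c"
    using \<gamma> by simp
  show "R c d (\<gamma> c) 0 = 0" if "d \<in> U c" for d
    using rate_function.zero_right[OF rf[OF that]] \<gamma> by simp
  show "R c d (\<gamma> c) y \<le> R c d (\<gamma> c) y'" if "d \<in> U c" "0 \<le> y" "y \<le> y'" for d y y'
    using rate_function.mono[OF rf[OF that(1)]] \<gamma> that by simp
  show "(1 - t) * R c d (\<gamma> c) a + t * R c d (\<gamma> c) b \<le> R c d (\<gamma> c) ((1 - t) * a + t * b)"
    if "d \<in> U c" "0 \<le> a" "0 \<le> b" "0 \<le> t" "t \<le> 1" for d a b t
    using rate_function.concave_right[OF rf[OF that(1)]] \<gamma> that by simp
  show "continuous_on {0..} (R c d (\<gamma> c))" if "d \<in> U c" for d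
    using rate_function.continuous_right[OF rf[OF that]] \<gamma> by simp
  show "0 < R c d (\<gamma> c) y" if "d \<in> U c" "0 < y" for d y
    using rate_function.pos[OF rf[OF that(1)]] \<gamma> that by simp
qed

lemma exists_equalized_feasG:
  assumes \<gamma>: "\<And>c. c \<in> C \<Longrightarrow> 0 < \<gamma> c \<and> \<gamma> c < 1"
  shows "\<exists>\<alpha> \<beta> z. feasG C U \<gamma> \<alpha> \<beta> \<and> 0 < z \<and> (\<forall>c\<in>C. \<forall>d\<in>U c. \<alpha> c * R c d (\<gamma> c) (\<beta> c d) = z)"
proof -
  have "\<forall>c\<in>C. \<exists>b m. b \<in> weights_on (U c) (1 - \<gamma> c) \<and> 0 < m \<and> (\<forall>d\<in>U c. R c d (\<gamma> c) (b d) = m)"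
    using equalized_weights_in_context \<gamma> by blast
  then obtain \<beta> M where \<beta>M: "\<And>c. c \<in> C \<Longrightarrow> \<beta> c \<in> weights_on (U c) (1 - \<gamma> c)"
    "\<And>c. c \<in> C \<Longrightarrow> 0 < M c" "\<And>c d. c \<in> C \<Longrightarrow> d \<in> U c \<Longrightarrow> R c d (\<gamma> c) (\<beta> c d) = M c"
    by metis
  define S where "S = (\<Sum>c\<in>C. 1 / M c)"
  have S: "0 < S"
    unfolding S_def using \<beta>M(2) finite_C C_ne by (intro sum_pos) auto
  define \<alpha> where "\<alpha> c = (1 / M c) / S" for c
  have "sum \<alpha> C = (\<Sum>c\<in>C. 1 / M c) / S"
    unfolding \<alpha>_def by (rule sum_divide_distrib[symmetric])
  then have "sum \<alpha> C = 1"
    using S unfolding S_def by simp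
  then have "feasG C U \<gamma> \<alpha> \<beta>"
    using \<beta>M S unfolding feasG_def weights_on_def \<alpha>_def by (auto simp: less_imp_le)
  moreover have "\<alpha> c * R c d (\<gamma> c) (\<beta> c d) = 1 / S" if "c \<in> C" "d \<in> U c" for c d
    using \<beta>M(2)[OF that(1)] \<beta>M(3)[OF that] unfolding \<alpha>_def by (simp add: field_simps)
  ultimately show ?thesis
    using S by (intro exI[of _ \<alpha>] exI[of _ \<beta>] exI[of _ "1 / S"]) auto
qed

lemma exists_equalized_optG:
  assumes "\<And>c. c \<in> C \<Longrightarrow> 0 < \<gamma> c \<and> \<gamma> c < 1"
  shows "\<exists>\<alpha> \<beta>. optG C U R \<gamma> \<alpha> \<beta> \<and> (\<exists>z>0. \<forall>c\<in>C. \<forall>d\<in>U c. \<alpha> c * R c d (\<gamma> c) (\<beta> c d) = z)"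
proof -
  obtain \<alpha> \<beta> z where "feasG C U \<gamma> \<alpha> \<beta>" "0 < z" "\<forall>c\<in>C. \<forall>d\<in>U c. \<alpha> c * R c d (\<gamma> c) (\<beta> c d) = z"
    using exists_equalized_feasG[where \<gamma> = \<gamma>, OF assms] by blast
  moreover have "optG C U R \<gamma> \<alpha> \<beta>"
    using optG_if_equalized calculation assms by (meson less_imp_le)
  ultimately show ?thesis
    by blast
qed

lemma objG_pos_if_optG:
  assumes "\<And>c. c \<in> C \<Longrightarrow> 0 < \<gamma> c \<and> \<gamma> c < 1" and "optG C U R \<gamma> \<alpha> \<beta>"
  shows "0 < objG C U R \<gamma> \<alpha> \<beta>"
proof -
  obtain \<alpha>0 \<beta>0 z where "feasG C U \<gamma> \<alpha>0 \<beta>0" "0 < z" "\<forall>c\<in>C. \<forall>d\<in>U c. \<alpha>0 c * R c d (\<gamma> c) (\<beta>0 c d) = z"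
    using exists_equalized_feasG[where \<gamma> = \<gamma>, OF assms(1)] by blast
  then have "0 < objG C U R \<gamma> \<alpha>0 \<beta>0"
    using objG_eq_if_equalized[of \<alpha>0 \<gamma> \<beta>0 z] by simp
  also have "\<dots> \<le> objG C U R \<gamma> \<alpha> \<beta>"
    using assms(2) \<open>feasG C U \<gamma> \<alpha>0 \<beta>0\<close> unfolding optG_def by blast
  finally show ?thesis .
qed

end

locale rate_family_designs = rate_family +
  fixes Dc :: "'c \<Rightarrow> 'd set" and dst :: "'c \<Rightarrow> 'd"
  assumes Dc: "c \<in> C \<Longrightarrow> finite (Dc c) \<and> dst c \<in> Dc c \<and> U c = Dc c - {dst c}"
begin

lemma feasG_if_feasU:
  assumes feas: "feasU C Dc \<alpha> \<beta>" and \<gamma>: "\<And>c. c \<in> C \<Longrightarrow> \<gamma> c = \<beta> c (dst c)"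
  shows "feasG C U \<gamma> \<alpha> \<beta>"
proof -
  have "sum (\<beta> c) (U c) = 1 - \<gamma> c" if "c \<in> C" for c
    using sum.remove[of "Dc c" "dst c" "\<beta> c"] Dc[OF that] feas \<gamma>[OF that] that
    unfolding feasU_def by auto
  then show ?thesis
    using feas Dc unfolding feasU_def feasG_def by auto
qed

lemma joint_weights_of_feasG:
  assumes feas: "feasG C U \<gamma> \<alpha> \<beta>" and \<gamma>: "\<And>c. c \<in> C \<Longrightarrow> 0 \<le> \<gamma> c"
  defines "w \<equiv> \<lambda>c e. \<alpha> c * (if e = dst c then \<gamma> c else \<beta> c e)"
  shows "\<And>c e. c \<in> C \<Longrightarrow> e \<in> Dc c \<Longrightarrow> 0 \<le> w c e" and "(\<Sum>c\<in>C. \<Sum>e\<in>Dc c. w c e) = 1"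
proof -
  show "0 \<le> w c e" if "c \<in> C" "e \<in> Dc c" for c e
    using that feas \<gamma> Dc unfolding feasG_def w_def by auto
  have "(\<Sum>e\<in>Dc c. w c e) = \<alpha> c" if c: "c \<in> C" for c
  proof -
    have "(\<Sum>e\<in>Dc c. w c e) = w c (dst c) + (\<Sum>e\<in>U c. w c e)"
      using Dc[OF c] sum.remove[of "Dc c" "dst c" "w c"] by auto
    also have "(\<Sum>e\<in>U c. w c e) = \<alpha> c * sum (\<beta> c) (U c)"
      unfolding w_def sum_distrib_left using Dc[OF c] by (intro sum.cong) auto
    finally show ?thesis
      using feas c unfolding feasG_def w_def by (simp add: algebra_simps)
  qed
  then show "(\<Sum>c\<in>C. \<Sum>e\<in>Dc c. w c e) = 1"
    using feas unfolding feasG_def by simp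
qed

lemma perturbed_weights:
  assumes w_nonneg: "\<And>c e. c \<in> C \<Longrightarrow> e \<in> Dc c \<Longrightarrow> 0 \<le> w c e"
    and w_sum: "(\<Sum>c\<in>C. \<Sum>e\<in>Dc c. w c e) = 1"
    and V: "0 \<le> V" and ge: "\<And>c d. c \<in> C \<Longrightarrow> d \<in> U c \<Longrightarrow> V \<le> R c d (w c (dst c)) (w c d)"
    and c0: "c0 \<in> C" "d0 \<in> U c0" and gt: "V < R c0 d0 (w c0 (dst c0)) (w c0 d0)"
  shows "\<exists>w'. (\<forall>c\<in>C. \<forall>e\<in>Dc c. 0 < w' c e) \<and> (\<Sum>c\<in>C. \<Sum>e\<in>Dc c. w' c e) = 1 \<and>
    (\<forall>c\<in>C. \<forall>d\<in>U c. V < R c d (w' c (dst c)) (w' c d))"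
proof -
  have d0: "d0 \<in> Dc c0" "d0 \<noteq> dst c0"
    using Dc c0 by auto
  obtain \<epsilon> where \<epsilon>: "0 < \<epsilon>" "\<epsilon> \<le> w c0 d0" "V < R c0 d0 (w c0 (dst c0)) (w c0 d0 - \<epsilon>)"
    using rate_function.decrease_right_above[OF rate_function_R[OF c0] w_nonneg w_nonneg V gt]
      c0 d0 Dc by blast
  define \<delta> where "\<delta> = \<epsilon> / card (SIGMA c:C. Dc c)"
  have "finite (SIGMA c:C. Dc c)" "(c0, d0) \<in> (SIGMA c:C. Dc c)"
    using finite_C Dc c0 d0 by auto
  then have "0 < card (SIGMA c:C. Dc c)"
    using card_gt_0_iff by blast
  then have \<delta>: "0 < \<delta>"
    using \<epsilon> unfolding \<delta>_def by simp
  define w' where "w' c e = w c e - (if (c, e) = (c0, d0) then \<epsilon> else 0) + \<delta>" for c e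
  have "0 < w' c e" if "c \<in> C" "e \<in> Dc c" for c e
    using w_nonneg[OF that] \<epsilon> \<delta> unfolding w'_def by auto
  moreover have "(\<Sum>c\<in>C. \<Sum>e\<in>Dc c. w' c e) = 1"
    unfolding w'_def \<delta>_def using sum_Sigma_move_mass[of C Dc c0 d0 w \<epsilon>] finite_C Dc c0 d0 w_sum
    by simp
  moreover have "V < R c d (w' c (dst c)) (w' c d)" if c: "c \<in> C" and d: "d \<in> U c" for c d
  proof -
    interpret rate_function "R c d"
      using rate_function_R[OF c d] .
    have dst: "dst c \<in> Dc c" "d \<in> Dc c" "w' c (dst c) = w c (dst c) + \<delta>"
      using Dc[OF c] d d0 unfolding w'_def by auto
    show ?thesis
    proof (cases "(c, d) = (c0, d0)")
      case True
      have "V < R c d (w c (dst c)) (w c d - \<epsilon>)"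
        using True \<epsilon>(3) by simp
      also have "\<dots> \<le> R c d (w' c (dst c)) (w' c d)"
        using True dst \<epsilon> \<delta> w_nonneg[OF c] unfolding w'_def by (intro mono) auto
      finally show ?thesis .
    next
      case False
      then have "w' c d = w c d + \<delta>"
        unfolding w'_def by auto
      then show ?thesis
        using less_add_diagonal[OF w_nonneg[OF c dst(1)] w_nonneg[OF c dst(2)] \<delta> ge[OF c d]] dst(3)
        by simp
    qed
  qed
  ultimately show ?thesis
    by blast
qed

lemma feasU_normalized_weights:
  assumes w_pos: "\<forall>c\<in>C. \<forall>e\<in>Dc c. 0 < w c e" and w_sum: "(\<Sum>c\<in>C. \<Sum>e\<in>Dc c. w c e) = 1"
  defines "\<alpha> \<equiv> \<lambda>c. \<Sum>e\<in>Dc c. w c e"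
  shows "feasU C Dc \<alpha> (\<lambda>c e. w c e / \<alpha> c)"
    and "\<And>c d. c \<in> C \<Longrightarrow> d \<in> U c \<Longrightarrow>
      \<alpha> c * R c d (w c (dst c) / \<alpha> c) (w c d / \<alpha> c) = R c d (w c (dst c)) (w c d)"
proof -
  have \<alpha>: "0 < \<alpha> c" if "c \<in> C" for c
    unfolding \<alpha>_def using Dc[OF that] w_pos that by (intro sum_pos) auto
  have "(\<Sum>e\<in>Dc c. w c e / \<alpha> c) = 1" if "c \<in> C" for c
    using \<alpha>[OF that] unfolding sum_divide_distrib[symmetric] by (simp add: \<alpha>_def)
  then show "feasU C Dc \<alpha> (\<lambda>c e. w c e / \<alpha> c)"
    unfolding feasU_def using \<alpha> w_pos w_sum by (auto simp: less_imp_le \<alpha>_def)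
  show "\<alpha> c * R c d (w c (dst c) / \<alpha> c) (w c d / \<alpha> c) = R c d (w c (dst c)) (w c d)"
    if "c \<in> C" "d \<in> U c" for c d
    using rate_function.homogeneous[OF rate_function_R[OF that] \<alpha>[OF that(1)],
        of "w c (dst c) / \<alpha> c" "w c d / \<alpha> c"] \<alpha>[OF that(1)] w_pos Dc that
    by (auto simp: less_imp_le)
qed

lemma objU_improvable:
  assumes w_nonneg: "\<And>c e. c \<in> C \<Longrightarrow> e \<in> Dc c \<Longrightarrow> 0 \<le> w c e"
    and w_sum: "(\<Sum>c\<in>C. \<Sum>e\<in>Dc c. w c e) = 1"
    and V: "0 \<le> V" and ge: "\<And>c d. c \<in> C \<Longrightarrow> d \<in> U c \<Longrightarrow> V \<le> R c d (w c (dst c)) (w c d)"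
    and c0: "c0 \<in> C" "d0 \<in> U c0" and gt: "V < R c0 d0 (w c0 (dst c0)) (w c0 d0)"
  shows "\<exists>\<alpha> \<beta>. feasU C Dc \<alpha> \<beta> \<and> V < objU C U dst R \<alpha> \<beta>"
proof -
  obtain w' where w': "\<forall>c\<in>C. \<forall>e\<in>Dc c. 0 < w' c e" "(\<Sum>c\<in>C. \<Sum>e\<in>Dc c. w' c e) = 1"
    "\<forall>c\<in>C. \<forall>d\<in>U c. V < R c d (w' c (dst c)) (w' c d)"
    using perturbed_weights[OF w_nonneg w_sum V ge c0 gt] by blast
  define \<alpha> where "\<alpha> c = (\<Sum>e\<in>Dc c. w' c e)" for c
  define \<beta> where "\<beta> c e = w' c e / \<alpha> c" for c e
  have "feasU C Dc \<alpha> \<beta>"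
    using feasU_normalized_weights(1)[OF w'(1,2)] unfolding \<alpha>_def \<beta>_def .
  moreover have "V < objU C U dst R \<alpha> \<beta>"
    using objG_attained[of "\<lambda>c. \<beta> c (dst c)" \<alpha> \<beta>] feasU_normalized_weights(2)[OF w'(1,2)] w'(3)
    unfolding objU_eq_objG \<alpha>_def \<beta>_def by fastforce
  ultimately show ?thesis
    by blast
qed

lemma equalized_if_optG:
  assumes \<gamma>: "\<And>c. c \<in> C \<Longrightarrow> 0 < \<gamma> c \<and> \<gamma> c < 1"
    and optU: "optU C Dc U dst R \<alpha>s \<beta>s" and \<gamma>_eq: "\<And>c. c \<in> C \<Longrightarrow> \<gamma> c = \<beta>s c (dst c)"
    and opt: "optG C U R \<gamma> \<alpha> \<beta>"
  shows "\<forall>c\<in>C. \<forall>d\<in>U c. \<alpha> c * R c d (\<gamma> c) (\<beta> c d) = objG C U R \<gamma> \<alpha> \<beta>"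
proof (rule ccontr)
  define V where "V = objG C U R \<gamma> \<alpha> \<beta>"
  have V: "0 < V"
    unfolding V_def using objG_pos_if_optG[where \<gamma> = \<gamma>, OF \<gamma> opt] .
  have feas: "feasG C U \<gamma> \<alpha> \<beta>"
    using opt unfolding optG_def by blast
  have "feasG C U \<gamma> \<alpha>s \<beta>s"
    using feasG_if_feasU[where \<gamma> = \<gamma> and \<alpha> = \<alpha>s and \<beta> = \<beta>s, OF _ \<gamma>_eq] optU
    unfolding optU_def by blast
  moreover have "objU C U dst R \<alpha>s \<beta>s = objG C U R \<gamma> \<alpha>s \<beta>s"
    unfolding objU_eq_objG objG_def using \<gamma>_eq by (simp cong: image_cong)
  ultimately have objU_le: "objU C U dst R \<alpha>s \<beta>s \<le> V"
    using opt unfolding optG_def V_def by simp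
  define w where "w c e = \<alpha> c * (if e = dst c then \<gamma> c else \<beta> c e)" for c e
  have w: "\<And>c e. c \<in> C \<Longrightarrow> e \<in> Dc c \<Longrightarrow> 0 \<le> w c e" "(\<Sum>c\<in>C. \<Sum>e\<in>Dc c. w c e) = 1"
    using joint_weights_of_feasG[OF feas] \<gamma> unfolding w_def by (auto simp: less_imp_le)
  have w_rate: "R c d (w c (dst c)) (w c d) = \<alpha> c * R c d (\<gamma> c) (\<beta> c d)" if "c \<in> C" "d \<in> U c" for c d
    using rate_function.scale[OF rate_function_R[OF that], of "\<alpha> c" "\<gamma> c" "\<beta> c d"] feas \<gamma> Dc that
    unfolding w_def feasG_def by (auto simp: less_imp_le)
  have ge: "V \<le> \<alpha> c * R c d (\<gamma> c) (\<beta> c d)" if "c \<in> C" "d \<in> U c" for c d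
    unfolding V_def using objG_le[OF that] feas that unfolding feasG_def by blast
  assume "\<not> (\<forall>c\<in>C. \<forall>d\<in>U c. \<alpha> c * R c d (\<gamma> c) (\<beta> c d) = objG C U R \<gamma> \<alpha> \<beta>)"
  then obtain c0 d0 where c0: "c0 \<in> C" "d0 \<in> U c0" and gt: "V < \<alpha> c0 * R c0 d0 (\<gamma> c0) (\<beta> c0 d0)"
    using ge unfolding V_def by (metis order_neq_le_trans)
  obtain \<alpha>' \<beta>' where "feasU C Dc \<alpha>' \<beta>'" "V < objU C U dst R \<alpha>' \<beta>'"
    using objU_improvable[OF w less_imp_le[OF V] _ c0] ge w_rate gt c0 by fastforce
  moreover have "objU C U dst R \<alpha>' \<beta>' \<le> objU C U dst R \<alpha>s \<beta>s"
    using optU calculation(1) unfolding optU_def by blast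
  ultimately show False
    using objU_le by linarith
qed

end

theorem proposition3:
  fixes C :: "'c set"
    and Dc :: "'c \<Rightarrow> 'd set"
    and M :: "real set" and H :: "(real ^ 'k) set"
    and \<theta>s :: "'d \<Rightarrow> real \<times> (real ^ 'k)"
    and \<nu> :: "'y measure"
    and p :: "real \<times> (real ^ 'k) \<Rightarrow> 'y \<Rightarrow> real"
    and \<gamma> :: "'c \<Rightarrow> real"
  defines "\<Theta> \<equiv> M \<times> H"
  defines "dst \<equiv> (\<lambda>c. best (\<lambda>d. fst (\<theta>s d)) (Dc c))"
  defines "U \<equiv> (\<lambda>c. Dc c - {dst c})"
  defines "G \<equiv> (\<lambda>c d x y. rateG (KL \<nu> p) \<Theta> \<theta>s d (dst c) x y)"
  assumes C_fin: "finite C" and C_ne: "C \<noteq> {}"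
    and D_fin: "\<forall>c\<in>C. finite (Dc c)"
    and D_two: "\<forall>c\<in>C. card (Dc c) \<ge> 2"
    and D_disj: "\<forall>c\<in>C. \<forall>c'\<in>C. c \<noteq> c' \<longrightarrow> Dc c \<inter> Dc c' = {}"
    and true_in: "\<forall>c\<in>C. \<forall>d\<in>Dc c. \<theta>s d \<in> \<Theta>"
    and mu_distinct: "inj_on (\<lambda>d. fst (\<theta>s d)) (\<Union>c\<in>C. Dc c)"
    \<comment> \<open>Assumption 1\<close>
    and A1_compact: "compact \<Theta>"
    and A1_boundary: "frontier \<Theta> \<in> null_sets lborel"
    and density_meas: "\<forall>\<theta>\<in>\<Theta>. p \<theta> \<in> borel_measurable \<nu>"
    and density_nonneg: "\<forall>\<theta>\<in>\<Theta>. \<forall>y\<in>space \<nu>. 0 \<le> p \<theta> y"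
    and density_prob: "\<forall>\<theta>\<in>\<Theta>. integrable \<nu> (p \<theta>) \<and> (\<integral>y. p \<theta> y \<partial>\<nu>) = 1"
    and A1_cont: "\<forall>y\<in>space \<nu>. continuous_on \<Theta> (\<lambda>\<theta>. p \<theta> y)"
    and A1_ident: "\<forall>\<theta>\<in>\<Theta>. \<forall>\<theta>'\<in>\<Theta>. \<theta> \<noteq> \<theta>' \<longrightarrow> density \<nu> (p \<theta>) \<noteq> density \<nu> (p \<theta>')"
    and A1_GC: "universal_GC \<nu> {(\<lambda>y. ln (p \<theta> y / p \<theta>' y)) | \<theta> \<theta>'. \<theta> \<in> \<Theta> \<and> \<theta>' \<in> \<Theta>}"
    \<comment> \<open>Assumption 2\<close>
    and A2_finite: "\<forall>c\<in>C. \<forall>d\<in>Dc c. \<forall>\<theta>\<in>\<Theta>.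
        (AE y in \<nu>. p \<theta> y = 0 \<longrightarrow> p (\<theta>s d) y = 0) \<and>
        integrable \<nu> (\<lambda>y. p (\<theta>s d) y * ln (p (\<theta>s d) y / p \<theta> y))"
    and A2_C1: "\<forall>c\<in>C. \<forall>d\<in>Dc c. \<exists>D'.
        (\<forall>\<theta>\<in>\<Theta>. ((\<lambda>\<theta>. KL \<nu> p (\<theta>s d) \<theta>) has_derivative blinfun_apply (D' \<theta>)) (at \<theta> within \<Theta>))
        \<and> continuous_on \<Theta> D'"
    \<comment> \<open>gamma in (0,1)^C\<close>
    and gamma_range: "\<forall>c\<in>C. 0 < \<gamma> c \<and> \<gamma> c < 1"
  shows
    "(\<forall>\<alpha> \<beta>. feasG C U \<gamma> \<alpha> \<beta> \<and>
        (\<exists>z>0. \<forall>c\<in>C. \<forall>d\<in>U c. \<alpha> c * G c d (\<gamma> c) (\<beta> c d) = z)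
        \<longrightarrow> optG C U G \<gamma> \<alpha> \<beta>)
     \<and> (\<exists>\<alpha> \<beta>. optG C U G \<gamma> \<alpha> \<beta> \<and>
        (\<exists>z>0. \<forall>c\<in>C. \<forall>d\<in>U c. \<alpha> c * G c d (\<gamma> c) (\<beta> c d) = z))
     \<and> ((\<exists>\<alpha>s \<beta>s. optU C Dc U dst G \<alpha>s \<beta>s \<and> (\<forall>c\<in>C. \<gamma> c = \<beta>s c (dst c)))
        \<longrightarrow> (\<forall>\<alpha> \<beta>. optG C U G \<gamma> \<alpha> \<beta> \<longrightarrow>
              (\<exists>z>0. \<forall>c\<in>C. \<forall>d\<in>U c. \<alpha> c * G c d (\<gamma> c) (\<beta> c d) = z)))"
proof -
  have dst: "dst c \<in> Dc c" "U c \<noteq> {}" "\<And>d. d \<in> U c \<Longrightarrow> fst (\<theta>s d) < fst (\<theta>s (dst c))"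
    if c: "c \<in> C" for c
  proof -
    have "inj_on (\<lambda>d. fst (\<theta>s d)) (Dc c)"
      using inj_on_subset[OF mu_distinct] c by blast
    note best = best_strictly_greatest[OF D_fin[rule_format, OF c] D_two[rule_format, OF c] this]
    show "dst c \<in> Dc c" "U c \<noteq> {}" "\<And>d. d \<in> U c \<Longrightarrow> fst (\<theta>s d) < fst (\<theta>s (dst c))"
      unfolding dst_def U_def using best by auto
  qed
  have Dc: "finite (Dc c) \<and> dst c \<in> Dc c \<and> U c = Dc c - {dst c}" if "c \<in> C" for c
    using D_fin dst(1)[OF that] that unfolding U_def by simp
  have U_finite: "finite (U c)" if "c \<in> C" for c
    using Dc[OF that] by simp
  have rate_function_G: "rate_function (G c d)" if c: "c \<in> C" and d: "d \<in> U c" for c d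
  proof -
    have "\<forall>e\<in>Dc c. \<exists>D'. \<forall>\<theta>\<in>\<Theta>. (KL \<nu> p (\<theta>s e) has_derivative blinfun_apply (D' \<theta>)) (at \<theta> within \<Theta>)"
      using A2_C1 c by blast
    then show ?thesis
      unfolding G_def
      using rate_function_KL_rateG[OF A1_compact density_meas density_nonneg density_prob A1_ident
          _ dst(1)[OF c] bspec[OF true_in c] bspec[OF A2_finite c] _ dst(3)[OF c d]] d
      unfolding U_def by blast
  qed
  interpret rate_family_designs C U G Dc dst
    by (rule rate_family_designs.intro[OF rate_family.intro[OF C_fin C_ne U_finite dst(2) rate_function_G]
          rate_family_designs_axioms.intro[OF Dc]])
  show ?thesis
  proof (intro conjI allI impI)
    fix \<alpha> \<beta> assume "feasG C U \<gamma> \<alpha> \<beta> \<and> (\<exists>z>0. \<forall>c\<in>C. \<forall>d\<in>U c. \<alpha> c * G c d (\<gamma> c) (\<beta> c d) = z)"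
    then show "optG C U G \<gamma> \<alpha> \<beta>"
      using optG_if_equalized[of \<gamma> \<alpha> \<beta>] gamma_range by (meson less_imp_le)
  next
    show "\<exists>\<alpha> \<beta>. optG C U G \<gamma> \<alpha> \<beta> \<and> (\<exists>z>0. \<forall>c\<in>C. \<forall>d\<in>U c. \<alpha> c * G c d (\<gamma> c) (\<beta> c d) = z)"
      using exists_equalized_optG gamma_range by blast
  next
    fix \<alpha> \<beta> assume "\<exists>\<alpha>s \<beta>s. optU C Dc U dst G \<alpha>s \<beta>s \<and> (\<forall>c\<in>C. \<gamma> c = \<beta>s c (dst c))"
      and "optG C U G \<gamma> \<alpha> \<beta>"
    then show "\<exists>z>0. \<forall>c\<in>C. \<forall>d\<in>U c. \<alpha> c * G c d (\<gamma> c) (\<beta> c d) = z"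
      using equalized_if_optG[where \<gamma> = \<gamma>] objG_pos_if_optG[where \<gamma> = \<gamma>] gamma_range
      by blast
  qed
qed

end
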